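(* Let $N\in\mathbb N$. The ring $R_J(N)$ contains: (1) the Laurent polynomials $\mathbb C[\zeta^{1/N},\zeta^{-1/N},q^{1/N},q^{-1/N}]$; (2) the Fourier expansions of weakly holomorphic Jacobi forms of level $N$ (of any weight $k$ and index $m\ge0$); (3) every infinite product of the form $\prod_{j=1}^\infty\bigl(1+q^{j/N}h_j(q^{1/N},\zeta^{1/N})\bigr)$, where each $h_j\in\mathbb C[q,\zeta,\zeta^{-1}]$ is either zero or a polynomial, and there is $D>0$ with $\deg_\zeta h_j\le D$ for all $j$, where $\deg_\zeta h_j=\max\{|r|:\ \zeta^r \text{ occurs in } h_j \text{ with nonzero coefficient}\}$.
   Context: $R(N)=\mathbb C[\zeta^{1/N},\zeta^{-1/N}]((q^{1/N}))$ is the ring of formal series $f=\sum_{n,r\in\frac1N\mathbb Z}c(n,r)q^n\zeta^r$ such that for each $n$ only finitely many $r$ have $c(n,r)\ne0$ and $n$ is bounded below on $\operatorname{supp}(f)=\{(n,r): c(n,r)\neq0\}$. $R_J(N)$ is the set of $f\in R(N)$ for which there exist $a>0$, $b,c\in\mathbb R$ with $\operatorname{supp}(f)\subseteq\{(n,r): n\ge ar^2+br+c\}$. Here $q=e^{2\pi i\tau}$, $\zeta=e^{2\pi i z}$ for $(\tau,z)\in\mathcal H_1\times\mathbb C$. Let $P_{2,1}(\mathbb Z)$ be the subgroup of $\operatorname{Sp}_2(\mathbb Z)$ of matrices whose entries in positions (1,2), (3,2), (4,1), (4,2), (4,3) vanish, and $\Gamma_2(N)=\{\sigma\in\operatorname{Sp}_2(\mathbb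 Z):\sigma\equiv I_4 \bmod N\}$. For $m\in\mathbb Q_{\ge0}$ and $2k\in\mathbb Z$, a weakly holomorphic Jacobi form of weight $k$, index $m$ and level $N$ is a holomorphic $\phi:\mathcal H_1\times\mathbb C\to\mathbb C$ such that $\tilde\phi\begin{pmatrix}\tau&z\\ z&\omega\end{pmatrix}=\phi(\tau,z)e^{2\pi i m\omega}$ satisfies $\det(C\Omega+D)^{-k}\tilde\phi(\sigma\langle\Omega\rangle)=\chi(\sigma)\tilde\phi(\Omega)$ for all $\sigma=\begin{pmatrix}A&B\\C&D\end{pmatrix}\in P_{2,1}(\mathbb Z)\cap\Gamma_2(N)$ (for a fixed multiplier $\chi$ of finite order), whose Fourier expansion $\sum c(n,r)q^n\zeta^r$ has $n,r\in\frac1N\mathbb Z$ with $n$ bounded below on the support (and similarly at each cusp). *)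

theory Defs
  imports "HOL-Analysis.Analysis"
begin

text \<open>A formal series sum c(n,r) q^n zeta^r with n, r in (1/N)Z is encoded by its
  coefficient function f :: int => int => complex, where f n r is the coefficient of
  q^(n/N) zeta^(r/N).\<close>

type_synonym fser = "int \<Rightarrow> int \<Rightarrow> complex"

definition fsupp :: "fser \<Rightarrow> (int \<times> int) set" where
  "fsupp f = {(n, r). f n r \<noteq> 0}"

definition inR :: "nat \<Rightarrow> fser \<Rightarrow> bool" where
  "inR N f \<longleftrightarrow> (\<forall>n. finite {r. f n r \<noteq> 0}) \<and> bdd_below {n. \<exists>r. f n r \<noteq> 0}"

definition inRJ :: "nat \<Rightarrow> fser \<Rightarrow> bool" where
  "inRJ N f \<longleftrightarrow> inR N f \<and>
     (\<exists>a b c :: real. a > 0 \<and>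
        (\<forall>(n, r) \<in> fsupp f. real_of_int n / real N \<ge>
            a * (real_of_int r / real N)^2 + b * (real_of_int r / real N) + c))"

definition laurent_poly :: "fser \<Rightarrow> bool" where
  "laurent_poly f \<longleftrightarrow> finite (fsupp f)"

definition fs_one :: fser where
  "fs_one n r = (if n = 0 \<and> r = 0 then 1 else 0)"

definition fs_mult :: "fser \<Rightarrow> fser \<Rightarrow> fser" where
  "fs_mult f g n r = (\<Sum>\<^sub>\<infinity>(n1, r1) \<in> UNIV. f n1 r1 * g (n - n1) (r - r1))"

text \<open>h j a r is the coefficient of q^a zeta^r in h_j in C[q, zeta, zeta^(-1)].
  The factor 1 + q^(j/N) h_j(q^(1/N), zeta^(1/N)) in the encoding above:\<close>
definition prod_factor :: "(nat \<Rightarrow> int \<Rightarrow> int \<Rightarrow> complex) \<Rightarrow> nat \<Rightarrow> fser" where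
  "prod_factor h j n r = fs_one n r + h j (n - int j) r"

primrec partial_prod :: "(nat \<Rightarrow> int \<Rightarrow> int \<Rightarrow> complex) \<Rightarrow> nat \<Rightarrow> fser" where
  "partial_prod h 0 = fs_one"
| "partial_prod h (Suc J) = fs_mult (partial_prod h J) (prod_factor h (Suc J))"

definition is_inf_prod :: "(nat \<Rightarrow> int \<Rightarrow> int \<Rightarrow> complex) \<Rightarrow> fser \<Rightarrow> bool" where
  "is_inf_prod h f \<longleftrightarrow>
     (\<forall>n. \<forall>\<^sub>F J in sequentially. \<forall>r. partial_prod h J n r = f n r)"

text \<open>4x4 integer matrices are functions nat => nat => int, entries indexed by 1..4.\<close>
type_synonym imat = "nat \<Rightarrow> nat \<Rightarrow> int"
type_synonym cmat2 = "nat \<Rightarrow> nat \<Rightarrow> complex"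

definition Jsym :: imat where
  "Jsym i j = (if (i, j) = (1, 3) \<or> (i, j) = (2, 4) then 1
               else if (i, j) = (3, 1) \<or> (i, j) = (4, 2) then -1 else 0)"

definition Sp2Z :: "imat \<Rightarrow> bool" where
  "Sp2Z M \<longleftrightarrow> (\<forall>i\<in>{1..4}. \<forall>j\<in>{1..4}.
      (\<Sum>k\<in>{1..4}. \<Sum>l\<in>{1..4}. M k i * Jsym k l * M l j) = Jsym i j)"

definition P21Z :: "imat \<Rightarrow> bool" where
  "P21Z M \<longleftrightarrow> Sp2Z M \<and> M 1 2 = 0 \<and> M 3 2 = 0 \<and> M 4 1 = 0 \<and> M 4 2 = 0 \<and> M 4 3 = 0"

definition Gamma2 :: "nat \<Rightarrow> imat \<Rightarrow> bool" where
  "Gamma2 N M \<longleftrightarrow> Sp2Z M \<and>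
     (\<forall>i\<in>{1..4}. \<forall>j\<in>{1..4}. int N dvd (M i j - (if i = j then 1 else 0)))"

definition blk :: "imat \<Rightarrow> nat \<Rightarrow> nat \<Rightarrow> cmat2" where
  "blk M r0 c0 = (\<lambda>i j. of_int (M (r0 + i) (c0 + j)))"

definition Om :: "complex \<Rightarrow> complex \<Rightarrow> complex \<Rightarrow> cmat2" where
  "Om \<tau> z \<omega> = (\<lambda>i j. if i = 1 \<and> j = 1 then \<tau> else if i = 2 \<and> j = 2 then \<omega> else z)"

definition madd2 :: "cmat2 \<Rightarrow> cmat2 \<Rightarrow> cmat2" where
  "madd2 X Y = (\<lambda>i j. X i j + Y i j)"

definition mmul2 :: "cmat2 \<Rightarrow> cmat2 \<Rightarrow> cmat2" where
  "mmul2 X Y = (\<lambda>i j. \<Sum>k\<in>{1,2}. X i k * Y k j)"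

definition det2 :: "cmat2 \<Rightarrow> complex" where
  "det2 X = X 1 1 * X 2 2 - X 1 2 * X 2 1"

definition minv2 :: "cmat2 \<Rightarrow> cmat2" where
  "minv2 X = (\<lambda>i j. (if i = 1 \<and> j = 1 then X 2 2 else if i = 2 \<and> j = 2 then X 1 1
                      else - X i j) / det2 X)"

definition sp_act :: "imat \<Rightarrow> cmat2 \<Rightarrow> cmat2" where
  "sp_act M W = mmul2 (madd2 (mmul2 (blk M 0 0) W) (blk M 0 2))
                      (minv2 (madd2 (mmul2 (blk M 2 0) W) (blk M 2 2)))"

definition j_fac :: "imat \<Rightarrow> cmat2 \<Rightarrow> complex" where
  "j_fac M W = det2 (madd2 (mmul2 (blk M 2 0) W) (blk M 2 2))"

text \<open>Siegel upper half space of degree 2 (symmetric Omega with Im Omega positive definite).\<close>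
definition H2 :: "complex \<Rightarrow> complex \<Rightarrow> complex \<Rightarrow> bool" where
  "H2 \<tau> z \<omega> \<longleftrightarrow> Im \<tau> > 0 \<and> Im \<tau> * Im \<omega> - (Im z)^2 > 0"

definition ephi :: "rat \<Rightarrow> (complex \<Rightarrow> complex \<Rightarrow> complex) \<Rightarrow> cmat2 \<Rightarrow> complex" where
  "ephi m \<phi> W = \<phi> (W 1 1) (W 1 2) * exp (2 * pi * \<i> * of_rat m * W 2 2)"

text \<open>det(C Omega + D)^(-k) tilde-phi(sigma<Omega>) (principal branch of the power).\<close>
definition slashed :: "real \<Rightarrow> rat \<Rightarrow> (complex \<Rightarrow> complex \<Rightarrow> complex) \<Rightarrow> imat \<Rightarrow> cmat2 \<Rightarrow> complex" where
  "slashed k m \<phi> M W = j_fac M W powr (- of_real k) * ephi m \<phi> (sp_act M W)"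

definition has_fexp :: "nat \<Rightarrow> (complex \<Rightarrow> complex \<Rightarrow> complex) \<Rightarrow> fser \<Rightarrow> bool" where
  "has_fexp N \<psi> c \<longleftrightarrow> (\<forall>\<tau> z. Im \<tau> > 0 \<longrightarrow>
     ((\<lambda>(n, r). c n r * exp (2 * pi * \<i> * (of_int n / of_nat N) * \<tau>)
                      * exp (2 * pi * \<i> * (of_int r / of_nat N) * z)) has_sum \<psi> \<tau> z) UNIV)"

definition weakly_hol_jacobi ::
  "nat \<Rightarrow> real \<Rightarrow> rat \<Rightarrow> (imat \<Rightarrow> complex) \<Rightarrow> (complex \<Rightarrow> complex \<Rightarrow> complex) \<Rightarrow> bool" where
  "weakly_hol_jacobi N k m chi \<phi> \<longleftrightarrow>
     (\<exists>l::int. 2 * k = of_int l) \<and> m \<ge> 0 \<and>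
     (\<exists>d::nat. d > 0 \<and> (\<forall>M. P21Z M \<and> Gamma2 N M \<longrightarrow> chi M ^ d = 1)) \<and>
     continuous_on ({\<tau>. Im \<tau> > 0} \<times> UNIV) (\<lambda>(\<tau>, z). \<phi> \<tau> z) \<and>
     (\<forall>z. (\<lambda>\<tau>. \<phi> \<tau> z) holomorphic_on {\<tau>. Im \<tau> > 0}) \<and>
     (\<forall>\<tau>. Im \<tau> > 0 \<longrightarrow> (\<lambda>z. \<phi> \<tau> z) holomorphic_on UNIV) \<and>
     (\<forall>M \<tau> z \<omega>. P21Z M \<and> Gamma2 N M \<and> H2 \<tau> z \<omega> \<longrightarrow>
        slashed k m \<phi> M (Om \<tau> z \<omega>) = chi M * ephi m \<phi> (Om \<tau> z \<omega>)) \<and>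
     (\<exists>c. has_fexp N \<phi> c \<and> bdd_below {n. \<exists>r. c n r \<noteq> 0}) \<and>
     (\<forall>M. P21Z M \<longrightarrow>
        (\<exists>\<psi> c. (\<forall>\<tau> z \<omega>. H2 \<tau> z \<omega> \<longrightarrow>
                   slashed k m \<phi> M (Om \<tau> z \<omega>) = \<psi> \<tau> z * exp (2 * pi * \<i> * of_rat m * \<omega>)) \<and>
                has_fexp N \<psi> c \<and> bdd_below {n. \<exists>r. c n r \<noteq> 0}))"

end

theory Submission
  imports Defs
begin

text \<open>All three kinds of series have their support, in the integer exponents of the encoding,
  above a parabola \<open>n \<ge> a r\<^sup>2 + b r + c\<close> with \<open>a > 0\<close>; such a bound alone already gives
  the finiteness conditions of \<open>R(N)\<close>.

  For a Jacobi form of index \<open>m = p/q\<close>, the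
  transformation law under the element \<open>z \<mapsto> z + Nq\<tau>\<close> of \<open>P_{2,1}(\<int>) \<inter> \<Gamma>_2(N)\<close> and the
  uniqueness of Fourier expansions make the support invariant under an affine map
  \<open>(n, r) \<mapsto> (n + rl + t, r + s)\<close> that preserves \<open>2sn - lr\<^sup>2\<close>; moving a point of the support
  into a strip \<open>0 \<le> r < s\<close>, where \<open>n\<close> is bounded below, bounds this quantity from below.
  For the product, a monomial of the \<open>J\<close>-th partial product uses nontrivial terms of \<open>k\<close>
  distinct factors, so \<open>n \<ge> k(k+1)/2\<close> and \<open>|r| \<le> Dk\<close>, whence \<open>r\<^sup>2 \<le> 2D\<^sup>2n\<close>; the same
  count shows that the partial products stabilise coefficientwise.\<close>

section \<open>Support above a parabola\<close>

definition support_above_parabola :: "fser \<Rightarrow> bool" where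
  "support_above_parabola f \<longleftrightarrow> (\<exists>a b c :: real. a > 0 \<and>
     (\<forall>n r. f n r \<noteq> 0 \<longrightarrow> a * (real_of_int r)\<^sup>2 + b * real_of_int r + c \<le> real_of_int n))"

lemma quadratic_lower_bound:
  fixes a b x :: real
  assumes "a > 0"
  shows "- (b\<^sup>2 / (4 * a)) \<le> a * x\<^sup>2 + b * x"
proof -
  have "a * x\<^sup>2 + b * x + b\<^sup>2 / (4 * a) = a * (x + b / (2 * a))\<^sup>2"
    using assms by (simp add: field_simps power2_eq_square)
  moreover have "0 \<le> a * (x + b / (2 * a))\<^sup>2"
    using assms by simp
  ultimately show ?thesis by linarith
qed

lemma quadratic_le_imp_abs_le:
  fixes a b C x :: real
  assumes "a > 0" and "a * x\<^sup>2 + b * x \<le> C"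
  shows "\<bar>x\<bar> \<le> max 1 ((\<bar>b\<bar> + \<bar>C\<bar>) / a)"
proof (cases "\<bar>x\<bar> \<le> 1")
  case False
  have "\<bar>x\<bar> * (a * \<bar>x\<bar>) = a * x\<^sup>2"
    by (simp add: power2_eq_square)
  also have "\<dots> \<le> C - b * x"
    using assms(2) by simp
  also have "\<dots> \<le> \<bar>C\<bar> + \<bar>b\<bar> * \<bar>x\<bar>"
    by (simp add: abs_mult[symmetric] abs_le_iff)
  also have "\<dots> \<le> \<bar>x\<bar> * (\<bar>C\<bar> + \<bar>b\<bar>)"
    using False by (simp add: algebra_simps mult_le_cancel_left1)
  finally have "a * \<bar>x\<bar> \<le> \<bar>b\<bar> + \<bar>C\<bar>"
    using False by (simp add: mult_le_cancel_left_pos add.commute)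
  then show ?thesis
    using assms(1) by (simp add: le_max_iff_disj pos_le_divide_eq mult.commute add.commute)
qed simp

lemma inR_if_support_above_parabola:
  assumes "support_above_parabola f"
  shows "inR N f"
proof -
  obtain a b c :: real where a: "a > 0"
    and above: "\<And>n r. f n r \<noteq> 0 \<Longrightarrow> a * (real_of_int r)\<^sup>2 + b * real_of_int r + c \<le> real_of_int n"
    using assms unfolding support_above_parabola_def by blast
  have "finite {r. f n r \<noteq> 0}" for n
  proof -
    define M where "M = max 1 ((\<bar>b\<bar> + \<bar>real_of_int n - c\<bar>) / a)"
    have "{r. f n r \<noteq> 0} \<subseteq> {-\<lceil>M\<rceil>..\<lceil>M\<rceil>}"
    proof
      fix r assume "r \<in> {r. f n r \<noteq> 0}"
      then have "\<bar>real_of_int r\<bar> \<le> M"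
        unfolding M_def using above[of n r] by (intro quadratic_le_imp_abs_le[OF a]) auto
      then show "r \<in> {-\<lceil>M\<rceil>..\<lceil>M\<rceil>}"
        by (simp add: abs_le_iff) linarith
    qed
    then show ?thesis
      by (rule finite_subset) simp
  qed
  moreover have "bdd_below {n. \<exists>r. f n r \<noteq> 0}"
  proof (rule bdd_belowI)
    fix n assume "n \<in> {n. \<exists>r. f n r \<noteq> 0}"
    then obtain r where "f n r \<noteq> 0" by blast
    then have "c - b\<^sup>2 / (4 * a) \<le> real_of_int n"
      using above quadratic_lower_bound[OF a, of b "real_of_int r"] by fastforce
    then show "\<lfloor>c - b\<^sup>2 / (4 * a)\<rfloor> \<le> n"
      by linarith
  qed
  ultimately show ?thesis
    unfolding inR_def by blast
qed

lemma inRJ_if_support_above_parabola: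
  assumes N: "N > 0" and f: "support_above_parabola f"
  shows "inRJ N f"
proof -
  obtain a b c :: real where a: "a > 0"
    and above: "\<And>n r. f n r \<noteq> 0 \<Longrightarrow> a * (real_of_int r)\<^sup>2 + b * real_of_int r + c \<le> real_of_int n"
    using f unfolding support_above_parabola_def by blast
  have "a * real N * (real_of_int r / real N)\<^sup>2 + b * (real_of_int r / real N) + c / real N
          \<le> real_of_int n / real N" if "f n r \<noteq> 0" for n r
  proof -
    have "a * real N * (real_of_int r / real N)\<^sup>2 + b * (real_of_int r / real N) + c / real N
        = (a * (real_of_int r)\<^sup>2 + b * real_of_int r + c) / real N"
      using N by (simp add: field_simps power2_eq_square)
    also have "\<dots> \<le> real_of_int n / real N"
      using above[OF that] by (simp add: divide_right_mono)
    finally show ?thesis .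
  qed
  moreover have "a * real N > 0"
    using a N by simp
  ultimately show ?thesis
    using inR_if_support_above_parabola[OF f] unfolding inRJ_def fsupp_def by blast
qed

lemma laurent_poly_support_above_parabola:
  assumes "laurent_poly f"
  shows "support_above_parabola f"
proof -
  have "bdd_below ((\<lambda>(n, r). real_of_int n - (real_of_int r)\<^sup>2) ` fsupp f)"
    using assms unfolding laurent_poly_def by (simp add: bdd_below_finite)
  then obtain c where c: "\<And>x. x \<in> fsupp f \<Longrightarrow> c \<le> (\<lambda>(n, r). real_of_int n - (real_of_int r)\<^sup>2) x"
    unfolding bdd_below_def by blast
  have "1 * (real_of_int r)\<^sup>2 + 0 * real_of_int r + c \<le> real_of_int n" if "f n r \<noteq> 0" for n r
    using c[of "(n, r)"] that by (simp add: fsupp_def)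
  then show ?thesis
    unfolding support_above_parabola_def using zero_less_one by blast
qed

section \<open>Infinite products\<close>

lemma fs_mult_eq_sum:
  assumes "finite (fsupp f)"
  shows "fs_mult f g n r = (\<Sum>(n1, r1)\<in>fsupp f. f n1 r1 * g (n - n1) (r - r1))"
proof -
  have "fs_mult f g n r = infsum (\<lambda>(n1, r1). f n1 r1 * g (n - n1) (r - r1)) (fsupp f)"
    unfolding fs_mult_def by (rule infsum_cong_neutral) (auto simp: fsupp_def)
  then show ?thesis
    using assms by simp
qed

lemma fsupp_fs_mult:
  assumes "finite (fsupp f)" and "(n, r) \<in> fsupp (fs_mult f g)"
  obtains n1 r1 n2 r2 where "(n1, r1) \<in> fsupp f" and "(n2, r2) \<in> fsupp g"
    and "n = n1 + n2" and "r = r1 + r2"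
proof -
  have "(\<Sum>(n1, r1)\<in>fsupp f. f n1 r1 * g (n - n1) (r - r1)) \<noteq> 0"
    using assms by (simp add: fsupp_def fs_mult_eq_sum)
  then obtain x where x: "x \<in> fsupp f" "(\<lambda>(n1, r1). f n1 r1 * g (n - n1) (r - r1)) x \<noteq> 0"
    by (rule sum.not_neutral_contains_not_neutral)
  obtain n1 r1 where "x = (n1, r1)"
    by (cases x)
  with x show ?thesis
    by (intro that[of n1 r1 "n - n1" "r - r1"]) (simp_all add: fsupp_def)
qed

lemma finite_fsupp_fs_mult:
  assumes "finite (fsupp f)" and "finite (fsupp g)"
  shows "finite (fsupp (fs_mult f g))"
proof (rule finite_subset)
  show "fsupp (fs_mult f g) \<subseteq> (\<lambda>((n1, r1), (n2, r2)). (n1 + n2, r1 + r2)) ` (fsupp f \<times> fsupp g)"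
  proof (clarify)
    fix n r
    assume "(n, r) \<in> fsupp (fs_mult f g)"
    then obtain n1 r1 n2 r2 where "(n1, r1) \<in> fsupp f" "(n2, r2) \<in> fsupp g" "n = n1 + n2" "r = r1 + r2"
      using fsupp_fs_mult[OF assms(1)] by blast
    then show "(n, r) \<in> (\<lambda>((n1, r1), (n2, r2)). (n1 + n2, r1 + r2)) ` (fsupp f \<times> fsupp g)"
      by (intro image_eqI[of _ _ "((n1, r1), (n2, r2))"]) simp_all
  qed
qed (use assms in simp)

lemma fsupp_fs_one: "fsupp fs_one = {(0, 0)}"
  by (auto simp: fsupp_def fs_one_def)

lemma prod_factor_nonzero_cases:
  assumes "prod_factor h j n r \<noteq> 0"
  shows "(n, r) = (0, 0) \<or> h j (n - int j) r \<noteq> 0"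
  using assms by (auto simp: prod_factor_def fs_one_def split: if_splits)

lemma fsupp_prod_factor:
  "fsupp (prod_factor h j) \<subseteq> insert (0, 0) ((\<lambda>(a, r). (a + int j, r)) ` {(a, r). h j a r \<noteq> 0})"
proof
  fix x
  assume "x \<in> fsupp (prod_factor h j)"
  then obtain n r where x: "x = (n, r)" and "prod_factor h j n r \<noteq> 0"
    by (auto simp: fsupp_def)
  then consider "(n, r) = (0, 0)" | "h j (n - int j) r \<noteq> 0"
    using prod_factor_nonzero_cases by blast
  then show "x \<in> insert (0, 0) ((\<lambda>(a, r). (a + int j, r)) ` {(a, r). h j a r \<noteq> 0})"
  proof cases
    case 2
    then have "(n - int j, r) \<in> {(a, r). h j a r \<noteq> 0}"
      by simp
    then show ?thesis
      using x by (intro insertI2 image_eqI[of _ _ "(n - int j, r)"]) simp_all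
  qed (use x in simp)
qed

context
  fixes h :: "nat \<Rightarrow> int \<Rightarrow> int \<Rightarrow> complex" and D :: real
  assumes finite_h: "\<And>j. finite {(a, r). h j a r \<noteq> 0}"
    and h_exponent_nonneg: "\<And>j a r. h j a r \<noteq> 0 \<Longrightarrow> a \<ge> 0"
    and h_degree: "\<And>j a r. j \<ge> 1 \<Longrightarrow> h j a r \<noteq> 0 \<Longrightarrow> real_of_int \<bar>r\<bar> \<le> D"
begin

lemma finite_fsupp_partial_prod: "finite (fsupp (partial_prod h J))"
proof (induction J)
  case (Suc J)
  have "finite (fsupp (prod_factor h (Suc J)))"
    by (rule finite_subset[OF fsupp_prod_factor]) (simp add: finite_h)
  with Suc show ?case
    by (simp add: finite_fsupp_fs_mult)
qed (simp add: fsupp_fs_one)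

lemma fsupp_partial_prod:
  assumes "(n, r) \<in> fsupp (partial_prod h J)"
  shows "\<exists>k::nat. k \<le> J \<and> int k * (int k + 1) \<le> 2 * n \<and> real_of_int \<bar>r\<bar> \<le> D * real k"
  using assms
proof (induction J arbitrary: n r)
  case 0
  then show ?case
    by (simp add: fsupp_fs_one)
next
  case (Suc J)
  obtain n1 r1 n2 r2 where nr1: "(n1, r1) \<in> fsupp (partial_prod h J)"
    and nr2: "(n2, r2) \<in> fsupp (prod_factor h (Suc J))" and nr: "n = n1 + n2" "r = r1 + r2"
    by (rule fsupp_fs_mult[OF finite_fsupp_partial_prod Suc.prems[unfolded partial_prod.simps]])
  obtain k where k: "k \<le> J" "int k * (int k + 1) \<le> 2 * n1" "real_of_int \<bar>r1\<bar> \<le> D * real k"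
    using Suc.IH[OF nr1] by blast
  consider "(n2, r2) = (0, 0)" | "h (Suc J) (n2 - int (Suc J)) r2 \<noteq> 0"
    using nr2 prod_factor_nonzero_cases[of h "Suc J" n2 r2] by (auto simp: fsupp_def)
  then show ?case
  proof cases
    case 1
    then show ?thesis
      using k nr by (intro exI[of _ k]) auto
  next
    case 2
    have "n2 \<ge> int J + 1"
      using h_exponent_nonneg[OF 2] by simp
    moreover have "int k \<le> int J"
      using k(1) by simp
    ultimately have "int k + 1 \<le> n2"
      by linarith
    then have "2 * (int k + 1) \<le> 2 * n2"
      by simp
    with k(2) have "int k * (int k + 1) + 2 * (int k + 1) \<le> 2 * n1 + 2 * n2"
      by (rule add_mono)
    then have "int k * (int k + 1) + 2 * (int k + 1) \<le> 2 * n"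
      using nr(1) by simp
    moreover have "int (Suc k) * (int (Suc k) + 1) = int k * (int k + 1) + 2 * (int k + 1)"
      by (simp add: algebra_simps)
    ultimately have "int (Suc k) * (int (Suc k) + 1) \<le> 2 * n"
      by simp
    moreover have "real_of_int \<bar>r\<bar> \<le> real_of_int \<bar>r1\<bar> + real_of_int \<bar>r2\<bar>"
      using nr(2) by (simp add: abs_triangle_ineq flip: of_int_add)
    moreover have "real_of_int \<bar>r2\<bar> \<le> D"
      using h_degree[OF _ 2] by simp
    ultimately show ?thesis
      using k(1,3) by (intro exI[of _ "Suc k"]) (simp add: distrib_left)
  qed
qed

lemma partial_prod_exponent_nonneg:
  assumes "partial_prod h J n r \<noteq> 0"
  shows "n \<ge> 0"
proof -
  have "(n, r) \<in> fsupp (partial_prod h J)"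
    using assms by (simp add: fsupp_def)
  then obtain k :: nat where "int k * (int k + 1) \<le> 2 * n"
    using fsupp_partial_prod by blast
  moreover have "int k * (int k + 1) \<ge> 0"
    by simp
  ultimately show ?thesis
    by linarith
qed

text \<open>Every nontrivial term of the factor \<open>J + 1\<close> has \<open>q\<close>-exponent at least \<open>J + 1\<close>, so it does
  not affect coefficients with \<open>n \<le> J\<close>.\<close>
lemma partial_prod_Suc_eq:
  assumes "n \<le> int J"
  shows "partial_prod h (Suc J) n r = partial_prod h J n r"
proof -
  let ?P = "partial_prod h J"
  have "prod_factor h (Suc J) (n - n1) (r - r1) = fs_one (n - n1) (r - r1)" if "(n1, r1) \<in> fsupp ?P" for n1 r1
  proof -
    have "n1 \<ge> 0"
      using that partial_prod_exponent_nonneg by (simp add: fsupp_def)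
    then have "h (Suc J) (n - n1 - int (Suc J)) (r - r1) = 0"
      using h_exponent_nonneg[of "Suc J" "n - n1 - int (Suc J)" "r - r1"] assms by linarith
    then show ?thesis
      by (simp add: prod_factor_def)
  qed
  then have "partial_prod h (Suc J) n r = (\<Sum>(n1, r1)\<in>fsupp ?P. ?P n1 r1 * fs_one (n - n1) (r - r1))"
    by (simp add: fs_mult_eq_sum[OF finite_fsupp_partial_prod] split_def)
  also have "\<dots> = (\<Sum>x\<in>fsupp ?P. if x = (n, r) then ?P n r else 0)"
    by (intro sum.cong) (auto simp: fs_one_def split: if_splits)
  also have "\<dots> = ?P n r"
    by (simp add: finite_fsupp_partial_prod) (simp add: fsupp_def)
  finally show ?thesis .
qed

lemma partial_prod_stable:
  assumes "nat n \<le> J"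
  shows "partial_prod h J n r = partial_prod h (nat n) n r"
  using assms
proof (induction J rule: dec_induct)
  case (step j)
  have "n \<le> int j"
    using step(1) by (simp add: nat_le_iff)
  then show ?case
    using step(3) partial_prod_Suc_eq by simp
qed simp

lemma inf_prod_exists: "is_inf_prod h (\<lambda>n r. partial_prod h (nat n) n r)"
  unfolding is_inf_prod_def eventually_sequentially
  using partial_prod_stable by blast

lemma inf_prod_support_above_parabola:
  assumes D: "D > 0" and f: "is_inf_prod h f"
  shows "support_above_parabola f"
proof -
  have "1 / (2 * D\<^sup>2) * (real_of_int r)\<^sup>2 + 0 * real_of_int r + 0 \<le> real_of_int n" if "f n r \<noteq> 0" for n r
  proof -
    obtain J where "partial_prod h J n r = f n r"
      using f unfolding is_inf_prod_def eventually_sequentially by blast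
    then have "(n, r) \<in> fsupp (partial_prod h J)"
      using that by (simp add: fsupp_def)
    then obtain k :: nat where k: "int k * (int k + 1) \<le> 2 * n" "real_of_int \<bar>r\<bar> \<le> D * real k"
      using fsupp_partial_prod by blast
    have "(real_of_int r)\<^sup>2 = (real_of_int \<bar>r\<bar>)\<^sup>2"
      by simp
    also have "\<dots> \<le> (D * real k)\<^sup>2"
      by (rule power_mono[OF k(2)]) simp
    also have "\<dots> = D\<^sup>2 * (real k * real k)"
      by (simp add: power_mult_distrib power2_eq_square)
    also have "\<dots> \<le> D\<^sup>2 * (real k * (real k + 1))"
      by (intro mult_left_mono) (simp_all add: distrib_left)
    also have "\<dots> \<le> D\<^sup>2 * (2 * real_of_int n)"
    proof -
      have "real_of_int (int k * (int k + 1)) \<le> real_of_int (2 * n)"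
        using k(1) by (simp only: of_int_le_iff)
      then show ?thesis
        by (intro mult_left_mono) simp_all
    qed
    finally show ?thesis
      using D by (simp add: field_simps)
  qed
  moreover have "1 / (2 * D\<^sup>2) > 0"
    using D by simp
  ultimately show ?thesis
    unfolding support_above_parabola_def by blast
qed

end

section \<open>Uniqueness of Fourier expansions\<close>

definition eN :: "nat \<Rightarrow> int \<Rightarrow> complex \<Rightarrow> complex" where
  "eN N k w = exp (2 * pi * \<i> * (of_int k / of_nat N) * w)"

lemma eN_add: "eN N k w * eN N l w = eN N (k + l) w"
  by (simp add: eN_def exp_add[symmetric] add_divide_distrib distrib_left distrib_right mult_ac)

lemma eN_add_arg: "eN N k (w1 + w2) = eN N k w1 * eN N k w2"
  by (simp add: eN_def exp_add[symmetric] distrib_left)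

lemma eN_nonzero [simp]: "eN N k w \<noteq> 0"
  by (simp add: eN_def)

lemma norm_eN_of_real [simp]: "norm (eN N k (of_real x)) = 1"
  by (simp add: eN_def norm_exp_eq_Re)

lemma eN_has_integral:
  assumes N: "N > 0"
  shows "((\<lambda>x. eN N m (of_real x)) has_integral (if m = 0 then of_nat N else 0)) {0..real N}"
proof (cases "m = 0")
  case True
  then show ?thesis
    using has_integral_const_real[of "1::complex" 0 "real N"] by (simp add: eN_def scaleR_conv_of_real)
next
  case False
  define A :: complex where "A = 2 * pi * \<i> * (of_int m / of_nat N)"
  have A: "A \<noteq> 0"
    using False N by (simp add: A_def)
  have "((\<lambda>t. exp (t *\<^sub>R A) * (1 / A)) has_vector_derivative exp (x *\<^sub>R A) * A * (1 / A))
          (at x within {0..real N})" for x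
    by (intro has_vector_derivative_mult_left exp_scaleR_has_vector_derivative_right)
  then have "((\<lambda>t. exp (t *\<^sub>R A) / A) has_vector_derivative exp (x *\<^sub>R A)) (at x within {0..real N})" for x
    using A by simp
  then have "((\<lambda>x. exp (x *\<^sub>R A)) has_integral (exp (real N *\<^sub>R A) / A - exp (0 *\<^sub>R A) / A)) {0..real N}"
    by (intro fundamental_theorem_of_calculus) auto
  moreover have "exp (real N *\<^sub>R A) = 1"
    using N exp_integer_2pi[of "of_int m"] by (simp add: A_def scaleR_conv_of_real mult_ac)
  moreover have "eN N m (of_real x) = exp (x *\<^sub>R A)" for x
    by (simp add: eN_def A_def scaleR_conv_of_real mult_ac)
  ultimately show ?thesis
    using False by simp
qed

lemma norm_sum_le_infsum_complement:
  fixes f :: "'a \<Rightarrow> 'b::banach"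
  assumes zero: "(f has_sum 0) A" and norm_f: "(\<lambda>k. norm (f k)) summable_on A"
    and G: "finite G" "G \<subseteq> A"
  shows "norm (sum f G) \<le> infsum (\<lambda>k. norm (f k)) (A - G)"
proof -
  have "f summable_on A"
    using zero by (auto simp: summable_on_def)
  then have "infsum f (A - G) = infsum f A - infsum f G"
    using G by (intro infsum_Diff) auto
  also have "\<dots> = - sum f G"
    using zero G(1) by (simp add: infsumI)
  finally have "norm (sum f G) = norm (infsum f (A - G))"
    by simp
  also have "\<dots> \<le> infsum (\<lambda>k. norm (f k)) (A - G)"
    by (intro norm_infsum_bound summable_on_subset_banach[OF norm_f]) blast
  finally show ?thesis .
qed

lemma small_infsum_complement:
  fixes g :: "'a \<Rightarrow> real"
  assumes g: "g summable_on UNIV" and nonneg: "\<And>k. g k \<ge> 0" and e: "e > 0"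
  obtains G where "finite G" and "j \<in> G" and "infsum g (UNIV - G) \<le> e"
proof -
  obtain F where F: "finite F" "dist (sum g F) (infsum g UNIV) \<le> e"
    using infsum_finite_approximation[OF g e] by blast
  define G where "G = insert j F"
  have G: "finite G" "j \<in> G"
    using F(1) by (simp_all add: G_def)
  have "sum g F \<le> sum g G"
    using G nonneg by (intro sum_mono2) (auto simp: G_def)
  moreover have "infsum g (UNIV - G) = infsum g UNIV - sum g G"
    using g G(1) by (simp add: infsum_Diff)
  ultimately have "infsum g (UNIV - G) \<le> e"
    using F(2) by (simp add: dist_real_def abs_le_iff)
  with G show ?thesis
    using that by blast
qed

text \<open>Integrating against \<open>eN N (-j)\<close> over one period extracts the coefficient \<open>a j\<close>;
  absolute convergence lets the partial sums over finite \<open>G\<close> approximate the zero function uniformly.\<close>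
lemma fourier_coefficients_unique_1d:
  fixes a :: "int \<Rightarrow> complex"
  assumes N: "N > 0" and zero: "\<And>x::real. ((\<lambda>k. a k * eN N k (of_real x)) has_sum 0) UNIV"
  shows "a j = 0"
proof -
  have "a summable_on UNIV"
    using zero[of 0] by (auto simp: summable_on_def eN_def)
  then have norm_a: "(\<lambda>k. norm (a k)) summable_on UNIV"
    using summable_on_iff_abs_summable_on_complex by blast
  have "norm (a j) \<le> e" if e: "e > 0" for e
  proof -
    obtain G where G: "finite G" "j \<in> G" and tail: "infsum (\<lambda>k. norm (a k)) (UNIV - G) \<le> e"
      using small_infsum_complement[OF norm_a _ e] by auto
    have uniform: "norm (\<Sum>k\<in>G. a k * eN N k (of_real x)) \<le> e" for x
    proof -
      have "(\<lambda>k. norm (a k * eN N k (of_real x))) summable_on UNIV"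
        using norm_a by (simp add: norm_mult)
      then show ?thesis
        using norm_sum_le_infsum_complement[OF zero[of x] _ G(1)] tail by (simp add: norm_mult)
    qed
    have "((\<lambda>x. \<Sum>k\<in>G. a k * eN N (k - j) (of_real x))
            has_integral (\<Sum>k\<in>G. a k * (if k - j = 0 then of_nat N else 0))) {0..real N}"
      by (intro has_integral_sum G has_integral_mult_right eN_has_integral[OF N])
    moreover have "(\<Sum>k\<in>G. a k * (if k - j = 0 then of_nat N else 0)) = a j * of_nat N"
      using G by (simp add: if_distrib sum.delta cong: if_cong)
    moreover have "(\<Sum>k\<in>G. a k * eN N (k - j) (of_real x))
        = (\<Sum>k\<in>G. a k * eN N k (of_real x)) * eN N (- j) (of_real x)" for x
      by (simp add: sum_distrib_right mult.assoc eN_add)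
    ultimately have integral: "((\<lambda>x. (\<Sum>k\<in>G. a k * eN N k (of_real x)) * eN N (- j) (of_real x))
        has_integral (a j * of_nat N)) (cbox 0 (real N))"
      by simp
    have "norm (a j * of_nat N) \<le> e * Henstock_Kurzweil_Integration.content (cbox 0 (real N))"
      by (rule has_integral_bound[OF _ integral]) (use e uniform in \<open>auto simp: norm_mult\<close>)
    then show ?thesis
      using N by (simp add: norm_mult)
  qed
  then show ?thesis
    by (metis norm_le_zero_iff field_lbound_gt_zero zero_less_norm_iff linorder_not_le)
qed

lemma fourier_coefficients_unique_2d:
  fixes e :: "int \<Rightarrow> int \<Rightarrow> complex"
  assumes N: "N > 0"
    and zero: "\<And>\<tau> z. Im \<tau> > 0 \<Longrightarrow> ((\<lambda>(n, r). e n r * eN N n \<tau> * eN N r z) has_sum 0) UNIV"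
  shows "e n0 r0 = 0"
proof -
  have row_summable: "(\<lambda>r. e n r * eN N r z) summable_on UNIV" for n z
  proof -
    have "(\<lambda>(n, r). e n r * eN N n \<i> * eN N r z) summable_on UNIV \<times> UNIV"
      using zero[of \<i> z] by (auto simp: summable_on_def)
    then have "(\<lambda>r. e n r * eN N n \<i> * eN N r z) summable_on UNIV"
      using summable_on_SigmaD1[of "\<lambda>n r. e n r * eN N n \<i> * eN N r z" UNIV "\<lambda>_. UNIV" n] by simp
    then have "(\<lambda>r. eN N n \<i> * (e n r * eN N r z)) summable_on UNIV"
      by (simp add: mult_ac)
    then show ?thesis
      by (simp add: summable_on_cmult_right')
  qed
  define row where "row n z = infsum (\<lambda>r. e n r * eN N r z) UNIV" for n z
  have row_zero: "row n (of_real x) = 0" for n x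
  proof -
    have "((\<lambda>n. (row n (of_real x) * eN N n \<i>) * eN N n (of_real y)) has_sum 0) UNIV" for y
    proof -
      define \<tau> where "\<tau> = of_real y + \<i>"
      have sum: "((\<lambda>(n, r). e n r * eN N n \<tau> * eN N r (of_real x)) has_sum 0) (UNIV \<times> UNIV)"
        using zero[of \<tau> "of_real x"] by (simp add: \<tau>_def)
      have "((\<lambda>r. eN N n \<tau> * (e n r * eN N r (of_real x))) has_sum eN N n \<tau> * row n (of_real x)) UNIV" for n
        unfolding row_def by (intro has_sum_cmult_right has_sum_infsum row_summable)
      moreover have "eN N n \<tau> * row n (of_real x) = (row n (of_real x) * eN N n \<i>) * eN N n (of_real y)" for n
        by (simp add: \<tau>_def eN_add_arg)
      ultimately have "((\<lambda>r. e n r * eN N n \<tau> * eN N r (of_real x)) has_sum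
          (row n (of_real x) * eN N n \<i>) * eN N n (of_real y)) UNIV" for n
        by (simp add: mult.assoc mult.left_commute)
      then show ?thesis
        by (intro has_sum_SigmaD[OF sum]) simp
    qed
    then have "row n (of_real x) * eN N n \<i> = 0"
      by (rule fourier_coefficients_unique_1d[OF N])
    then show ?thesis
      by simp
  qed
  have "((\<lambda>r. e n0 r * eN N r (of_real x)) has_sum 0) UNIV" for x
    using has_sum_infsum[OF row_summable[of n0 "of_real x"]] row_zero[of n0 x] by (simp add: row_def)
  then show ?thesis
    by (rule fourier_coefficients_unique_1d[OF N])
qed

lemma has_fexp_eN:
  "has_fexp N \<psi> c \<longleftrightarrow>
     (\<forall>\<tau> z. Im \<tau> > 0 \<longrightarrow> ((\<lambda>(n, r). c n r * eN N n \<tau> * eN N r z) has_sum \<psi> \<tau> z) UNIV)"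
  by (simp add: has_fexp_def eN_def)

lemma has_fexp_unique:
  assumes N: "N > 0" and "has_fexp N \<psi> c" and "has_fexp N \<psi> d"
  shows "c = d"
proof (intro ext)
  fix n r
  have "c n r - d n r = 0"
  proof (rule fourier_coefficients_unique_2d[OF N])
    fix \<tau> z :: complex
    assume "Im \<tau> > 0"
    then have "((\<lambda>x. (\<lambda>(n, r). c n r * eN N n \<tau> * eN N r z) x + - (\<lambda>(n, r). d n r * eN N n \<tau> * eN N r z) x)
        has_sum (\<psi> \<tau> z + - \<psi> \<tau> z)) UNIV"
      using assms by (intro has_sum_add has_sum_uminusI) (auto simp: has_fexp_eN)
    then show "((\<lambda>(n, r). (c n r - d n r) * eN N n \<tau> * eN N r z) has_sum 0) UNIV"
      by (simp add: case_prod_unfold algebra_simps)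
  qed
  then show "c n r = d n r"
    by simp
qed

lemma has_fexp_cong:
  assumes "has_fexp N \<psi> c" and "\<And>\<tau> z. Im \<tau> > 0 \<Longrightarrow> \<psi> \<tau> z = \<psi>' \<tau> z"
  shows "has_fexp N \<psi>' c"
  using assms by (simp add: has_fexp_def)

lemma has_fexp_cmult:
  assumes "has_fexp N \<psi> c"
  shows "has_fexp N (\<lambda>\<tau> z. a * \<psi> \<tau> z) (\<lambda>n r. a * c n r)"
  using assms by (auto simp: has_fexp_eN case_prod_unfold mult.assoc intro!: has_sum_cmult_right)

text \<open>The substitution \<open>z \<mapsto> z + l\<tau>\<close> followed by multiplication with the monomial
  \<open>q^(t/N) \<zeta>^(s/N)\<close> moves the coefficient at \<open>(n, r)\<close> to \<open>(n + r l + t, r + s)\<close>.\<close>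
lemma has_fexp_translate:
  assumes "has_fexp N \<psi> c"
  shows "has_fexp N (\<lambda>\<tau> z. \<psi> \<tau> (z + of_int l * \<tau>) * eN N t \<tau> * eN N s z)
           (\<lambda>n r. c (n - (r - s) * l - t) (r - s))"
  unfolding has_fexp_eN
proof (intro allI impI)
  fix \<tau> z :: complex
  assume "Im \<tau> > 0"
  define g where "g = (\<lambda>(n, r). (n + r * l + t, r + s))"
  have bij: "bij_betw g UNIV UNIV"
    by (rule bij_betwI[where g = "\<lambda>(n, r). (n - (r - s) * l - t, r - s)"])
       (auto simp: g_def algebra_simps)
  have "((\<lambda>(n, r). c n r * eN N n \<tau> * eN N r (z + of_int l * \<tau>) * (eN N t \<tau> * eN N s z))
      has_sum \<psi> \<tau> (z + of_int l * \<tau>) * (eN N t \<tau> * eN N s z)) UNIV"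
    using assms \<open>Im \<tau> > 0\<close> unfolding has_fexp_eN case_prod_unfold by (intro has_sum_cmult_left) blast
  moreover have "(\<lambda>x. (\<lambda>(n, r). c (n - (r - s) * l - t) (r - s) * eN N n \<tau> * eN N r z) (g x))
      = (\<lambda>(n, r). c n r * eN N n \<tau> * eN N r (z + of_int l * \<tau>) * (eN N t \<tau> * eN N s z))"
  proof (intro ext, clarify)
    fix n r
    have "eN N r (of_int l * \<tau>) = eN N (r * l) \<tau>"
      by (simp add: eN_def field_simps)
    then show "(\<lambda>(n, r). c (n - (r - s) * l - t) (r - s) * eN N n \<tau> * eN N r z) (g (n, r))
        = c n r * eN N n \<tau> * eN N r (z + of_int l * \<tau>) * (eN N t \<tau> * eN N s z)"
      by (simp add: g_def eN_add_arg mult_ac flip: eN_add)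
  qed
  ultimately have "((\<lambda>x. (\<lambda>(n, r). c (n - (r - s) * l - t) (r - s) * eN N n \<tau> * eN N r z) (g x))
      has_sum \<psi> \<tau> (z + of_int l * \<tau>) * eN N t \<tau> * eN N s z) UNIV"
    by (simp add: mult.assoc)
  then show "((\<lambda>(n, r). c (n - (r - s) * l - t) (r - s) * eN N n \<tau> * eN N r z)
      has_sum \<psi> \<tau> (z + of_int l * \<tau>) * eN N t \<tau> * eN N s z) UNIV"
    by (simp only: has_sum_reindex_bij_betw[OF bij])
qed

section \<open>Supports invariant under an affine map\<close>

lemma funpow_orbit:
  assumes "\<And>x. x \<in> S \<Longrightarrow> f x \<in> S" and "\<And>x. Q (f x) = Q x" and "\<And>x. snd (f x) = snd x + d"
    and "x \<in> S"
  shows "(f ^^ k) x \<in> S \<and> Q ((f ^^ k) x) = Q x \<and> snd ((f ^^ k) x) = snd x + int k * d"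
  using assms by (induction k) (auto simp: algebra_simps)

text \<open>Since \<open>2t = ls\<close>, the quantity \<open>2sn - lr\<^sup>2\<close> is invariant under
  \<open>(n, r) \<mapsto> (n + rl + t, r + s)\<close>; moving along the orbit until \<open>0 \<le> r < s\<close> and using the
  lower bound for \<open>n\<close> there bounds it from below on all of \<open>S\<close>.\<close>
lemma translation_invariant_quadratic_bound:
  fixes S :: "(int \<times> int) set" and l s t B :: int
  assumes inv: "\<And>n r. (n, r) \<in> S \<longleftrightarrow> (n + r * l + t, r + s) \<in> S"
    and bdd: "\<And>n r. (n, r) \<in> S \<Longrightarrow> B \<le> n"
    and lst: "2 * t = l * s" and s: "s > 0" and l: "l \<ge> 0"
    and nr: "(n, r) \<in> S"
  shows "l * r\<^sup>2 \<le> 2 * s * n + (l * s\<^sup>2 - 2 * s * B)"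
proof -
  define Q where "Q = (\<lambda>(n, r). 2 * s * n - l * r\<^sup>2)"
  define up where "up = (\<lambda>(n, r). (n + r * l + t, r + s))"
  define down where "down = (\<lambda>(n, r). (n - (r - s) * l - t, r - s))"
  have Q_up: "Q (up x) = Q x" and Q_down: "Q (down x) = Q x" for x
    using lst by (auto simp: Q_def up_def down_def power2_eq_square algebra_simps split: prod.splits)
  have S_up: "up x \<in> S" and S_down: "down x \<in> S" if "x \<in> S" for x
    using that inv[of "fst x" "snd x"] inv[of "fst (down x)" "snd (down x)"]
    by (auto simp: up_def down_def split: prod.splits)
  obtain n' where n': "(n', r mod s) \<in> S" "Q (n', r mod s) = Q (n, r)"
  proof -
    obtain f d k where f: "\<And>x. x \<in> S \<Longrightarrow> f x \<in> S" "\<And>x. Q (f x) = Q x" "\<And>x. snd (f x) = snd x + d"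
      and k: "r mod s = r + int k * d"
    proof (cases "r div s \<ge> 0")
      case True
      then have "r mod s = r + int (nat (r div s)) * (- s)"
        by (simp add: minus_div_mult_eq_mod[symmetric] mult.commute)
      then show ?thesis
        using that[of down "- s" "nat (r div s)"] S_down Q_down by (auto simp: down_def split: prod.splits)
    next
      case False
      then have "r mod s = r + int (nat (- (r div s))) * s"
        by (simp add: minus_div_mult_eq_mod[symmetric] mult.commute)
      then show ?thesis
        using that[of up s "nat (- (r div s))"] S_up Q_up by (auto simp: up_def split: prod.splits)
    qed
    define x where "x = (f ^^ k) (n, r)"
    have "x \<in> S" "Q x = Q (n, r)" "r mod s = snd x"
      using funpow_orbit[of S f Q d, OF f nr, of k] k by (simp_all add: x_def)
    then show ?thesis
      by (intro that[of "fst x"]) simp_all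
  qed
  have "l * (r mod s)\<^sup>2 \<le> l * s\<^sup>2"
    using s l by (intro mult_left_mono power_mono) (auto simp: order.strict_implies_order)
  moreover have "2 * s * B \<le> 2 * s * n'"
    using bdd[OF n'(1)] s by simp
  ultimately show ?thesis
    using n'(2) by (simp add: Q_def)
qed

text \<open>The degenerate case \<open>s = t = 0\<close>: a point off the line \<open>r = 0\<close> has an orbit with \<open>n\<close>
  unbounded below.\<close>
lemma shear_invariant_support_on_axis:
  fixes S :: "(int \<times> int) set" and l B :: int
  assumes inv: "\<And>n r. (n, r) \<in> S \<longleftrightarrow> (n + r * l, r) \<in> S"
    and bdd: "\<And>n r. (n, r) \<in> S \<Longrightarrow> B \<le> n"
    and l: "l \<noteq> 0" and nr: "(n, r) \<in> S"
  shows "r = 0"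
proof (rule ccontr)
  assume "r \<noteq> 0"
  then have d: "\<bar>r * l\<bar> \<ge> 1"
    using l by (simp add: int_one_le_iff_zero_less)
  have "(n + int k * (r * l), r) \<in> S \<and> (n - int k * (r * l), r) \<in> S" for k
  proof (induction k)
    case (Suc k)
    then show ?case
      using inv[of "n + int k * (r * l)" r] inv[of "n - int (Suc k) * (r * l)" r]
      by (simp add: algebra_simps)
  qed (use nr in simp)
  then have orbit: "(n - int k * \<bar>r * l\<bar>, r) \<in> S" for k
    by (cases "r * l \<ge> 0") auto
  define k where "k = nat (n - B + 1)"
  have "B \<le> n - int k * \<bar>r * l\<bar>"
    using bdd orbit by blast
  moreover have "int k \<le> int k * \<bar>r * l\<bar>"
    using d mult_left_mono[of 1 "\<bar>r * l\<bar>" "int k"] by simp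
  moreover have "n - B + 1 \<le> int k"
    by (simp add: k_def)
  ultimately show False
    by linarith
qed

lemma translation_invariant_support_above_parabola:
  fixes c :: fser and l s t :: int
  assumes inv: "\<And>n r. c n r \<noteq> 0 \<longleftrightarrow> c (n + r * l + t) (r + s) \<noteq> 0"
    and bdd: "bdd_below {n. \<exists>r. c n r \<noteq> 0}"
    and lst: "2 * t = l * s" and s: "s \<ge> 0" and l: "l > 0"
  shows "support_above_parabola c"
proof -
  obtain B where B: "\<And>n r. (n, r) \<in> fsupp c \<Longrightarrow> B \<le> n"
    using bdd by (auto simp: bdd_below_def fsupp_def)
  have inv': "(n, r) \<in> fsupp c \<longleftrightarrow> (n + r * l + t, r + s) \<in> fsupp c" for n r
    using inv by (simp add: fsupp_def)
  show ?thesis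
  proof (cases "s = 0")
    case True
    then have "(n, r) \<in> fsupp c \<longleftrightarrow> (n + r * l, r) \<in> fsupp c" for n r
      using inv' lst by simp
    then have "r = 0 \<and> B \<le> n" if "c n r \<noteq> 0" for n r
      using shear_invariant_support_on_axis[of "fsupp c" l B n r] B l that by (auto simp: fsupp_def)
    then have "\<forall>n r. c n r \<noteq> 0 \<longrightarrow> 1 * (real_of_int r)\<^sup>2 + 0 * real_of_int r + real_of_int B \<le> real_of_int n"
      by force
    then show ?thesis
      unfolding support_above_parabola_def using zero_less_one by blast
  next
    case False
    with s have s: "s > 0" by simp
    define K where "K = l * s\<^sup>2 - 2 * s * B"
    have "real_of_int l / (2 * real_of_int s) * (real_of_int r)\<^sup>2 + 0 * real_of_int r
        + - real_of_int K / (2 * real_of_int s) \<le> real_of_int n" if "c n r \<noteq> 0" for n r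
    proof -
      have "l * r\<^sup>2 \<le> 2 * s * n + K"
        unfolding K_def using that l s
        by (intro translation_invariant_quadratic_bound[OF inv' B lst]) (auto simp: fsupp_def)
      then have "real_of_int (l * r\<^sup>2 - K) \<le> real_of_int (2 * s * n)"
        by (simp only: of_int_le_iff)
      then have "real_of_int l * (real_of_int r)\<^sup>2 - real_of_int K \<le> 2 * real_of_int s * real_of_int n"
        by simp
      then show ?thesis
        using s by (simp add: field_simps)
    qed
    moreover have "real_of_int l / (2 * real_of_int s) > 0"
      using l s by simp
    ultimately show ?thesis
      unfolding support_above_parabola_def by blast
  qed
qed

section \<open>Jacobi forms\<close>

text \<open>The element \<open>[\<lambda>, 0]\<close> of the Heisenberg part of \<open>P_{2,1}(\<int>)\<close>; it acts by
  \<open>(\<tau>, z, \<omega>) \<mapsto> (\<tau>, z + \<lambda>\<tau>, \<omega> + \<lambda>\<^sup>2\<tau> + 2\<lambda>z)\<close>.\<close>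
definition shift_matrix :: "int \<Rightarrow> imat" where
  "shift_matrix l i j =
     (if i = j then 1 else if i = 2 \<and> j = 1 then l else if i = 3 \<and> j = 4 then -l else 0)"

lemma Sp2Z_shift_matrix: "Sp2Z (shift_matrix l)"
proof -
  have "{1..4::nat} = {1, 2, 3, 4}"
    by auto
  then show ?thesis
    by (simp add: Sp2Z_def shift_matrix_def Jsym_def)
qed

lemma P21Z_shift_matrix: "P21Z (shift_matrix l)"
  by (simp add: P21Z_def Sp2Z_shift_matrix) (simp add: shift_matrix_def)

lemma Gamma2_shift_matrix:
  assumes "int N dvd l"
  shows "Gamma2 N (shift_matrix l)"
proof -
  have "{1..4::nat} = {1, 2, 3, 4}"
    by auto
  then show ?thesis
    using assms by (simp add: Gamma2_def Sp2Z_shift_matrix) (simp add: shift_matrix_def)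
qed

lemma slashed_shift_matrix:
  "slashed k m \<phi> (shift_matrix l) (Om \<tau> z \<omega>)
     = \<phi> \<tau> (z + of_int l * \<tau>) * exp (2 * pi * \<i> * of_rat m * (\<omega> + of_int l ^ 2 * \<tau> + 2 * of_int l * z))"
proof -
  have "j_fac (shift_matrix l) (Om \<tau> z \<omega>) = 1"
    by (simp add: j_fac_def det2_def madd2_def mmul2_def blk_def shift_matrix_def)
  moreover have "sp_act (shift_matrix l) (Om \<tau> z \<omega>) 1 1 = \<tau>"
    and "sp_act (shift_matrix l) (Om \<tau> z \<omega>) 1 2 = z + of_int l * \<tau>"
    and "sp_act (shift_matrix l) (Om \<tau> z \<omega>) 2 2 = \<omega> + of_int l ^ 2 * \<tau> + 2 * of_int l * z"
    by (simp_all add: sp_act_def minv2_def det2_def madd2_def mmul2_def blk_def shift_matrix_def Om_def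
        algebra_simps power2_eq_square)
  ultimately show ?thesis
    by (simp add: slashed_def ephi_def)
qed

lemma jacobi_translation_law:
  assumes jac: "weakly_hol_jacobi N k m chi \<phi>" and l: "int N dvd l" and \<tau>: "Im \<tau> > 0"
  shows "\<phi> \<tau> (z + of_int l * \<tau>) * exp (2 * pi * \<i> * of_rat m * (of_int l ^ 2 * \<tau> + 2 * of_int l * z))
         = chi (shift_matrix l) * \<phi> \<tau> z"
proof -
  define \<omega> where "\<omega> = \<i> * of_real ((Im z)\<^sup>2 / Im \<tau> + 1)"
  have "H2 \<tau> z \<omega>"
    using \<tau> by (simp add: H2_def \<omega>_def field_simps)
  then have "slashed k m \<phi> (shift_matrix l) (Om \<tau> z \<omega>) = chi (shift_matrix l) * ephi m \<phi> (Om \<tau> z \<omega>)"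
    using jac P21Z_shift_matrix Gamma2_shift_matrix[OF l] unfolding weakly_hol_jacobi_def by blast
  then have "\<phi> \<tau> (z + of_int l * \<tau>) * exp (2 * pi * \<i> * of_rat m * (of_int l ^ 2 * \<tau> + 2 * of_int l * z))
      * exp (2 * pi * \<i> * of_rat m * \<omega>) = chi (shift_matrix l) * \<phi> \<tau> z * exp (2 * pi * \<i> * of_rat m * \<omega>)"
    unfolding slashed_shift_matrix by (simp add: ephi_def Om_def exp_add[symmetric] algebra_simps)
  then show ?thesis
    by simp
qed

lemma jacobi_multiplier_nonzero:
  assumes jac: "weakly_hol_jacobi N k m chi \<phi>" and l: "int N dvd l"
  shows "chi (shift_matrix l) \<noteq> 0"
proof -
  obtain d :: nat where "d > 0" and "chi (shift_matrix l) ^ d = 1"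
    using jac P21Z_shift_matrix Gamma2_shift_matrix[OF l] unfolding weakly_hol_jacobi_def by blast
  then show ?thesis
    by (cases d) auto
qed

lemma jacobi_coeff_translation:
  assumes N: "N > 0" and jac: "weakly_hol_jacobi N k m chi \<phi>" and c: "has_fexp N \<phi> c"
    and l: "int N dvd l"
    and t: "of_rat m * of_int l ^ 2 = (of_int t / of_nat N :: complex)"
    and s: "of_rat m * 2 * of_int l = (of_int s / of_nat N :: complex)"
  shows "c n r = chi (shift_matrix l) * c (n + r * l + t) (r + s)"
proof -
  have "\<phi> \<tau> (z + of_int l * \<tau>) * eN N t \<tau> * eN N s z = chi (shift_matrix l) * \<phi> \<tau> z"
    if "Im \<tau> > 0" for \<tau> z
  proof -
    have "eN N t \<tau> * eN N s z = exp (2 * pi * \<i> * of_rat m * (of_int l ^ 2 * \<tau> + 2 * of_int l * z))"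
      by (simp add: eN_def flip: t s exp_add) (simp add: algebra_simps)
    then show ?thesis
      using jacobi_translation_law[OF jac l that, of z] by (simp add: mult.assoc)
  qed
  then have "has_fexp N (\<lambda>\<tau> z. chi (shift_matrix l) * \<phi> \<tau> z) (\<lambda>n r. c (n - (r - s) * l - t) (r - s))"
    by (rule has_fexp_cong[OF has_fexp_translate[OF c]])
  moreover have "has_fexp N (\<lambda>\<tau> z. chi (shift_matrix l) * \<phi> \<tau> z) (\<lambda>n r. chi (shift_matrix l) * c n r)"
    by (rule has_fexp_cmult[OF c])
  ultimately have coeffs: "(\<lambda>n r. c (n - (r - s) * l - t) (r - s)) = (\<lambda>n r. chi (shift_matrix l) * c n r)"
    by (rule has_fexp_unique[OF N])
  show ?thesis
    using fun_cong[OF fun_cong[OF coeffs, of "n + r * l + t"], of "r + s"] by simp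
qed

text \<open>With \<open>m = p/q\<close>, the translation \<open>z \<mapsto> z + l\<tau>\<close> for \<open>l = Nq\<close> turns the factor
  \<open>e(m(l\<^sup>2\<tau> + 2lz))\<close> into the monomial \<open>q^(t/N) \<zeta>^(s/N)\<close> with integers
  \<open>s = 2pN\<^sup>2\<close> and \<open>t = pqN\<^sup>3\<close>.\<close>
lemma jacobi_support_above_parabola:
  assumes N: "N > 0" and jac: "weakly_hol_jacobi N k m chi \<phi>" and c: "has_fexp N \<phi> c"
  shows "support_above_parabola c"
proof -
  obtain c0 where c0: "has_fexp N \<phi> c0" "bdd_below {n. \<exists>r. c0 n r \<noteq> 0}"
    using jac unfolding weakly_hol_jacobi_def by blast
  have bdd: "bdd_below {n. \<exists>r. c n r \<noteq> 0}"
    using c0 has_fexp_unique[OF N c c0(1)] by simp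
  obtain p q where pq: "quotient_of m = (p, q)"
    by (cases "quotient_of m")
  have q: "q > 0" and m: "m = of_int p / of_int q"
    using quotient_of_denom_pos[OF pq] quotient_of_div[OF pq] by simp_all
  have "m \<ge> 0"
    using jac unfolding weakly_hol_jacobi_def by blast
  with q m have p: "p \<ge> 0"
    by (simp add: zero_le_divide_iff)
  define l where "l = int N * q"
  define s where "s = 2 * p * int N ^ 2"
  define t where "t = p * q * int N ^ 3"
  have "(of_rat m :: complex) = of_int p / of_int q"
    by (simp add: m of_rat_divide)
  then have q_exponent: "of_rat m * of_int l ^ 2 = (of_int t / of_nat N :: complex)"
    and zeta_exponent: "of_rat m * 2 * of_int l = (of_int s / of_nat N :: complex)"
    using q N by (simp_all add: l_def s_def t_def field_simps power2_eq_square power3_eq_cube)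
  have l: "int N dvd l"
    by (simp add: l_def)
  have "c n r \<noteq> 0 \<longleftrightarrow> c (n + r * l + t) (r + s) \<noteq> 0" for n r
    using jacobi_coeff_translation[OF N jac c l q_exponent zeta_exponent, of n r] jacobi_multiplier_nonzero[OF jac l]
    by simp
  moreover note bdd
  moreover have "2 * t = l * s" and "s \<ge> 0" and "l > 0"
    using N q p by (simp_all add: l_def s_def t_def power2_eq_square power3_eq_cube)
  ultimately show ?thesis
    by (rule translation_invariant_support_above_parabola)
qed

theorem lemma4p6:
  fixes N :: nat
  assumes "N > 0"
  shows "(\<forall>f. laurent_poly f \<longrightarrow> inRJ N f)
    \<and> (\<forall>k m chi \<phi> c. weakly_hol_jacobi N k m chi \<phi> \<and> has_fexp N \<phi> c \<longrightarrow> inRJ N c)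
    \<and> (\<forall>(h :: nat \<Rightarrow> int \<Rightarrow> int \<Rightarrow> complex) (D :: real).
         (\<forall>j. finite {(a, r). h j a r \<noteq> 0} \<and> (\<forall>a r. h j a r \<noteq> 0 \<longrightarrow> a \<ge> 0)) \<and>
         D > 0 \<and> (\<forall>j \<ge> 1. \<forall>a r. h j a r \<noteq> 0 \<longrightarrow> real_of_int \<bar>r\<bar> \<le> D)
         \<longrightarrow> (\<exists>f. is_inf_prod h f) \<and> (\<forall>f. is_inf_prod h f \<longrightarrow> inRJ N f))"
proof (intro conjI allI impI)
  fix f :: fser
  assume "laurent_poly f"
  then show "inRJ N f"
    using assms by (intro inRJ_if_support_above_parabola laurent_poly_support_above_parabola)
next
  fix k m chi \<phi> c
  assume "weakly_hol_jacobi N k m chi \<phi> \<and> has_fexp N \<phi> c"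
  then show "inRJ N c"
    using assms by (intro inRJ_if_support_above_parabola jacobi_support_above_parabola) auto
next
  fix h :: "nat \<Rightarrow> int \<Rightarrow> int \<Rightarrow> complex" and D :: real
  assume "(\<forall>j. finite {(a, r). h j a r \<noteq> 0} \<and> (\<forall>a r. h j a r \<noteq> 0 \<longrightarrow> a \<ge> 0)) \<and>
    D > 0 \<and> (\<forall>j \<ge> 1. \<forall>a r. h j a r \<noteq> 0 \<longrightarrow> real_of_int \<bar>r\<bar> \<le> D)"
  then have finite: "\<And>j. finite {(a, r). h j a r \<noteq> 0}"
    and nonneg: "\<And>j a r. h j a r \<noteq> 0 \<Longrightarrow> a \<ge> 0" and D: "D > 0"
    and degree: "\<And>j a r. j \<ge> 1 \<Longrightarrow> h j a r \<noteq> 0 \<Longrightarrow> real_of_int \<bar>r\<bar> \<le> D"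
    by blast+
  show "\<exists>f. is_inf_prod h f"
    using inf_prod_exists finite nonneg degree by blast
  fix f
  assume "is_inf_prod h f"
  then show "inRJ N f"
    using assms by (intro inRJ_if_support_above_parabola inf_prod_support_above_parabola[OF finite nonneg degree D])
qed

end
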